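(* Let $\mathcal{G}$ be a finite collection of nonempty subsets of $\{1,\dots,d\}$, let $n=\sum_{g\in\mathcal{G}}|g|$, and let $\mathbb{R}^n$ be partitioned into pairwise disjoint index blocks $j(g)\subseteq\{1,\dots,n\}$, $|j(g)|=|g|$, one for each $g\in\mathcal{G}$, so that for $\mathbf{x}\in\mathbb{R}^n$ the subvector $\mathbf{x}_{j(g)}\in\mathbb{R}^{|g|}$ is identified with a vector supported on the coordinates in $g$. Let $M\in\{0,1\}^{d\times n}$ be the matrix with $(M\mathbf{x})_i=\sum_{g\in\mathcal{G}:\, i\in g}(\text{entry of }\mathbf{x}_{j(g)}\text{ corresponding to coordinate }i)$. Let $\lambda>0$, $w_g>0$ for $g\in\mathcal{G}$, $\mathbf{b}\in\mathbb{R}^d$ and $\rho>0$. Define the augmented Lagrangian $$L_\rho(\mathbf{x}^1,\mathbf{x}^2;\mathbf{y})=\lambda\sum_{g\in\mathcal{G}}w_g\|\mathbf{x}^1_{j(g)}\|_2+\tfrac12\|M\mathbf{x}^2-\mathbf{b}\|_2^2+\langle\mathbf{y},\mathbf{x}^1-\mathbf{x}^2\rangle+\tfrac{\rho}{2}\|\mathbf{x}^1-\mathbf{x}^2\|_2^2,$$ for $\mathbf{x}^1,\mathbf{x}^2,\mathbf{y}\in\mathbb{R}^n$, the augmented dual function $g_\rho(\mathbf{y})=\min_{\mathbf{x}^1,\mathbf{x}^2\in\mathbb{R}^n}L_\rho(\mathbf{x}^1,\mathbf{x}^2;\mathbf{y})$, and let $Y^*$ be the set of maximizers of $g_\rho$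 over $\mathbb{R}^n$. Then there exists $\tau_d>0$ such that for all $\mathbf{y}\in\mathbb{R}^n$, $$\mathrm{dist}(\mathbf{y},Y^* )\le\tau_d\|\nabla g_\rho(\mathbf{y})\|_2 .$$
   Context: This is the reformulation of the proximal operator of the latent overlapping group lasso penalty $\Omega(\boldsymbol\beta)=\inf\{\sum_g w_g\|\boldsymbol\nu^{(g)}\|_2:\sum_g\boldsymbol\nu^{(g)}=\boldsymbol\beta,\ \boldsymbol\nu^{(g)}_{g^c}=0\}$ evaluated at $\mathbf{b}$, written as $\min_{\mathbf{x}^1,\mathbf{x}^2}\lambda\sum_g w_g\|\mathbf{x}^1_{j(g)}\|_2+\frac12\|M\mathbf{x}^2-\mathbf{b}\|_2^2$ subject to $\mathbf{x}^1=\mathbf{x}^2$; $L_\rho$ is its augmented Lagrangian with multiplier $\mathbf{y}$ for the constraint $\mathbf{x}^1=\mathbf{x}^2$, and $\mathrm{dist}(\mathbf{y},Y^* )=\inf_{\mathbf{y}^*\in Y^*}\|\mathbf{y}-\mathbf{y}^*\|_2$. *)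

theory Defs
  imports "HOL-Analysis.Analysis"
begin

text \<open>Vectors in R^n are elements of real^'n with CARD('n) = n. The block j g
  (a set of indices of type 'n) is identified with the group g via the
  bijection phi g : j g -> g, so that (x_{j(g)}) entry for coordinate i is
  x $ (inv_into (j g) (phi g) i).  Vectors in R^d are functions nat => real,
  coordinates 1..d.\<close>

definition Mop :: "nat set set \<Rightarrow> (nat set \<Rightarrow> 'n::finite set) \<Rightarrow> (nat set \<Rightarrow> 'n \<Rightarrow> nat)
    \<Rightarrow> real^'n \<Rightarrow> nat \<Rightarrow> real" where
  "Mop G j phi x i = (\<Sum>g\<in>{g\<in>G. i \<in> g}. x $ (inv_into (j g) (phi g) i))"

definition block_norm :: "('n::finite) set \<Rightarrow> real^'n \<Rightarrow> real" where
  "block_norm J x = sqrt (\<Sum>k\<in>J. (x $ k)^2)"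

definition aug_lag :: "nat set set \<Rightarrow> (nat set \<Rightarrow> 'n::finite set) \<Rightarrow> (nat set \<Rightarrow> 'n \<Rightarrow> nat)
    \<Rightarrow> nat \<Rightarrow> real \<Rightarrow> (nat set \<Rightarrow> real) \<Rightarrow> (nat \<Rightarrow> real) \<Rightarrow> real
    \<Rightarrow> real^'n \<Rightarrow> real^'n \<Rightarrow> real^'n \<Rightarrow> real" where
  "aug_lag G j phi d lam w b rho x1 x2 y =
     lam * (\<Sum>g\<in>G. w g * block_norm (j g) x1)
     + 1/2 * (\<Sum>i\<in>{1..d}. (Mop G j phi x2 i - b i)^2)
     + inner y (x1 - x2)
     + rho / 2 * (norm (x1 - x2))^2"

definition aug_dual :: "nat set set \<Rightarrow> (nat set \<Rightarrow> 'n::finite set) \<Rightarrow> (nat set \<Rightarrow> 'n \<Rightarrow> nat)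
    \<Rightarrow> nat \<Rightarrow> real \<Rightarrow> (nat set \<Rightarrow> real) \<Rightarrow> (nat \<Rightarrow> real) \<Rightarrow> real
    \<Rightarrow> real^'n \<Rightarrow> real" where
  "aug_dual G j phi d lam w b rho y =
     (INF p\<in>UNIV. aug_lag G j phi d lam w b rho (fst p) (snd p) y)"

definition dual_maximizers :: "(real^'n::finite \<Rightarrow> real) \<Rightarrow> (real^'n) set" where
  "dual_maximizers f = {y. \<forall>y'. f y' \<le> f y}"

end

theory Submission
  imports Defs
begin

(* The gradient of g_rho at y is the residual r = x1 - x2 of any minimizer (x1, x2) of
   L_rho(., .; y).  Comparing minimizers for two multipliers y, y', convexity of the penalty and
   the quadratic growth of L_rho in x1 - x2 and in M x2 give
     rho ||r' - r||^2 + ||M (x2' - x2)||^2 <= <y - y', r' - r>,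
   so the residual is (1/rho)-Lipschitz and g_rho is differentiable with a quadratic remainder.
   A dual maximizer is y0 = M^T (M x0 - b) for a primal solution x0, and (x0, x0) minimizes
   L_rho(., .; y0).  Stationarity in x2 gives
     ||y - y0||^2 = <M (x2 - x0), M (y - y0)> - rho <r, y - y0>,
   while the inequality above gives ||M (x2 - x0)||^2 <= ||y - y0|| ||r||; together they bound
   ||y - y0|| by a multiple of ||r||. *)

lemma nonneg_if_nonneg_near_zero:
  fixes a S :: real
  assumes "\<And>t. 0 < t \<Longrightarrow> t \<le> 1 \<Longrightarrow> 0 \<le> a + t * S"
  shows "0 \<le> a"
proof (rule tendsto_lowerbound)
  show "((\<lambda>t. a + t * S) \<longlongrightarrow> a) (at_right 0)"
    by (auto intro!: tendsto_eq_intros)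
  show "\<forall>\<^sub>F t in at_right 0. 0 \<le> a + t * S"
    using eventually_at_right_real[of 0 1] by (rule eventually_mono) (auto intro: assms)
qed simp

lemma quadratic_nonneg_imp_linear_coeff_eq_0:
  fixes L S :: real
  assumes "\<And>t. 0 \<le> t * L + t\<^sup>2 * S"
  shows "L = 0"
proof -
  have "0 \<le> L + t * S" "0 \<le> - L + t * S" if "0 < t" for t
  proof -
    have "0 \<le> t * (L + t * S)" "0 \<le> t * (- L + t * S)"
      using assms[of t] assms[of "- t"] by (simp_all add: power2_eq_square algebra_simps)
    then show "0 \<le> L + t * S" "0 \<le> - L + t * S"
      using that by (simp_all add: zero_le_mult_iff)
  qed
  then show ?thesis
    using nonneg_if_nonneg_near_zero[of L S] nonneg_if_nonneg_near_zero[of "- L" S] by force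
qed

lemma convex_on_min_slope_ineq:
  fixes f :: "'a::real_vector \<Rightarrow> real"
  assumes "convex_on UNIV f"
    and min: "\<And>t. 0 < t \<Longrightarrow> t \<le> 1 \<Longrightarrow> f x \<le> f (x + t *\<^sub>R v) + t * L + t\<^sup>2 * S"
  shows "f x \<le> f (x + v) + L"
proof -
  have "0 \<le> f (x + v) - f x + L + t * S" if t: "0 < t" "t \<le> 1" for t
  proof -
    have "f (x + t *\<^sub>R v) \<le> (1 - t) * f x + t * f (x + v)"
      using convex_onD[OF assms(1), of t x "x + v"] t by (simp add: algebra_simps)
    then have "0 \<le> t * (f (x + v) - f x + L + t * S)"
      using min[OF t] by (simp add: power2_eq_square algebra_simps)
    then show ?thesis
      using t by (simp add: zero_le_mult_iff)
  qed
  then show ?thesis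
    using nonneg_if_nonneg_near_zero[of "f (x + v) - f x + L" S] by simp
qed

lemma le_sum_if_square_le:
  fixes x p q :: real
  assumes "0 \<le> p" "0 \<le> q" "x\<^sup>2 \<le> p * x + q\<^sup>2"
  shows "x \<le> p + q"
proof (rule ccontr)
  assume "\<not> x \<le> p + q"
  then have "(p + q) * x < x * x" and "q * q \<le> q * x"
    using assms by (simp_all add: mult_strict_right_mono mult_left_mono)
  then show False
    using assms(3) by (simp add: power2_eq_square algebra_simps)
qed

lemma mult_le_quarter_square_plus:
  fixes a s rho :: real
  assumes "0 < rho"
  shows "a * s \<le> rho / 4 * s\<^sup>2 + a\<^sup>2 / rho"
proof -
  have "0 \<le> (rho / 2 * s - a)\<^sup>2 / rho"
    using assms by simp
  also have "\<dots> = rho / 4 * s\<^sup>2 + a\<^sup>2 / rho - a * s"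
    using assms by (simp add: power2_eq_square field_simps)
  finally show ?thesis by simp
qed

lemma attains_inf_if_bounded_sublevel:
  fixes F :: "'a::heine_borel \<Rightarrow> real"
  assumes "continuous_on UNIV F" and "bounded {x. F x \<le> F x0}"
  shows "\<exists>x. \<forall>u. F x \<le> F u"
proof -
  let ?S = "{x. F x \<le> F x0}"
  have "compact ?S"
    using assms by (simp add: compact_eq_bounded_closed closed_Collect_le)
  moreover have "x0 \<in> ?S" by simp
  ultimately obtain x where "x \<in> ?S" and "\<forall>u\<in>?S. F x \<le> F u"
    using continuous_attains_inf[of ?S F] continuous_on_subset[OF assms(1)] by blast
  then have "F x \<le> F u" for u
    by (cases "u \<in> ?S") auto
  then show ?thesis by blast
qed

lemma gderiv_if_quadratic_remainder:
  fixes F :: "'a::real_inner \<Rightarrow> real"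
  assumes "\<And>y'. \<bar>F y' - F y - inner (y' - y) D\<bar> \<le> C * (norm (y' - y))\<^sup>2"
  shows "GDERIV F y :> D"
  unfolding gderiv_def has_derivative_at_alt
proof (intro conjI allI impI bounded_linear_inner_left)
  fix e :: real
  assume "0 < e"
  show "\<exists>\<delta>>0. \<forall>y'. norm (y' - y) < \<delta> \<longrightarrow> norm (F y' - F y - inner (y' - y) D) \<le> e * norm (y' - y)"
  proof (intro exI[of _ "e / (\<bar>C\<bar> + 1)"] conjI allI impI)
    show "0 < e / (\<bar>C\<bar> + 1)" using \<open>0 < e\<close> by simp
    fix y'
    assume "norm (y' - y) < e / (\<bar>C\<bar> + 1)"
    then have "(\<bar>C\<bar> + 1) * norm (y' - y) \<le> e"
      by (simp add: field_simps)
    then have "(\<bar>C\<bar> + 1) * norm (y' - y) * norm (y' - y) \<le> e * norm (y' - y)"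
      by (simp add: mult_right_mono)
    moreover have "C * (norm (y' - y))\<^sup>2 \<le> (\<bar>C\<bar> + 1) * norm (y' - y) * norm (y' - y)"
      using mult_right_mono[of C "\<bar>C\<bar> + 1" "(norm (y' - y))\<^sup>2"]
      by (simp add: power2_eq_square mult.assoc)
    ultimately show "norm (F y' - F y - inner (y' - y) D) \<le> e * norm (y' - y)"
      using assms[of y'] by simp
  qed
qed

section \<open>The augmented Lagrangian of a split least-squares problem\<close>

text \<open>The problem is min f x1 + lsq x2 subject to x1 = x2, where lsq x = ||M x - b||^2 / 2 and
  the matrix M is given by its rows A _ i, i in I.\<close>

locale split_least_squares =
  fixes f :: "'a::euclidean_space \<Rightarrow> real"
    and A :: "'a \<Rightarrow> 'i \<Rightarrow> real" and I :: "'i set" and b :: "'i \<Rightarrow> real"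
    and rho c :: real
  assumes convex_f: "convex_on UNIV f"
    and coercive_f: "\<And>x. c * norm x \<le> f x"
    and c_pos: "0 < c"
    and linear_A: "\<And>i. linear (\<lambda>x. A x i)"
    and rho_pos: "0 < rho"
begin

definition lsq :: "'a \<Rightarrow> real" where
  "lsq x = 1/2 * (\<Sum>i\<in>I. (A x i - b i)\<^sup>2)"

definition lsq_deriv :: "'a \<Rightarrow> 'a \<Rightarrow> real" where
  "lsq_deriv x v = (\<Sum>i\<in>I. (A x i - b i) * A v i)"

definition A_norm :: "'a \<Rightarrow> real" where
  "A_norm v = L2_set (A v) I"

definition A_bound :: real where
  "A_bound = L2_set (\<lambda>i. onorm (\<lambda>x. A x i)) I"

definition lagr :: "'a \<Rightarrow> 'a \<Rightarrow> 'a \<Rightarrow> real" where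
  "lagr y x1 x2 = f x1 + lsq x2 + inner y (x1 - x2) + rho / 2 * (norm (x1 - x2))\<^sup>2"

definition is_lagr_min :: "'a \<Rightarrow> 'a \<Rightarrow> 'a \<Rightarrow> bool" where
  "is_lagr_min y x1 x2 \<longleftrightarrow> (\<forall>u1 u2. lagr y x1 x2 \<le> lagr y u1 u2)"

definition dual :: "'a \<Rightarrow> real" where
  "dual y = (INF p. lagr y (fst p) (snd p))"

definition lagr_argmin :: "'a \<Rightarrow> 'a \<times> 'a" where
  "lagr_argmin y = (SOME p. is_lagr_min y (fst p) (snd p))"

definition dual_grad :: "'a \<Rightarrow> 'a" where
  "dual_grad y = fst (lagr_argmin y) - snd (lagr_argmin y)"

lemma A_add: "A (x + y) i = A x i + A y i"
  using linear_add[OF linear_A] .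

lemma A_diff: "A (x - y) i = A x i - A y i"
  using linear_diff[OF linear_A] .

lemma A_scaleR: "A (t *\<^sub>R x) i = t * A x i"
  using linear_scale[OF linear_A] by simp

lemma A_norm_sq: "(A_norm v)\<^sup>2 = (\<Sum>i\<in>I. (A v i)\<^sup>2)"
  by (simp add: A_norm_def L2_set_def sum_nonneg)

lemma A_norm_minus_commute: "A_norm (x - y) = A_norm (y - x)"
  by (simp add: A_norm_def L2_set_def A_diff power2_commute)

lemma A_norm_le: "A_norm v \<le> A_bound * norm v"
proof -
  have "\<bar>A v i\<bar> \<le> onorm (\<lambda>x. A x i) * norm v" for i
    using onorm[of "\<lambda>x. A x i" v] linear_A linear_conv_bounded_linear by auto
  then have "L2_set (\<lambda>i. \<bar>A v i\<bar>) I \<le> L2_set (\<lambda>i. onorm (\<lambda>x. A x i) * norm v) I"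
    by (rule L2_set_mono) simp
  then have "A_norm v \<le> L2_set (\<lambda>i. onorm (\<lambda>x. A x i) * norm v) I"
    by (simp add: A_norm_def L2_set_def)
  then show ?thesis
    by (simp add: A_bound_def L2_set_left_distrib)
qed

lemma lsq_nonneg: "0 \<le> lsq x"
  by (simp add: lsq_def sum_nonneg)

lemma lsq_expand: "lsq (x + t *\<^sub>R v) = lsq x + t * lsq_deriv x v + t\<^sup>2 / 2 * (A_norm v)\<^sup>2"
proof -
  have "(A (x + t *\<^sub>R v) i - b i)\<^sup>2
      = (A x i - b i)\<^sup>2 + 2 * t * ((A x i - b i) * A v i) + t\<^sup>2 * (A v i)\<^sup>2" for i
    by (simp add: A_add A_scaleR power2_eq_square algebra_simps)
  then have "(\<Sum>i\<in>I. (A (x + t *\<^sub>R v) i - b i)\<^sup>2)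
      = (\<Sum>i\<in>I. (A x i - b i)\<^sup>2) + 2 * t * lsq_deriv x v + t\<^sup>2 * (A_norm v)\<^sup>2"
    by (simp add: sum.distrib sum_distrib_left lsq_deriv_def A_norm_sq)
  then show ?thesis
    by (simp add: lsq_def algebra_simps)
qed

lemma lsq_deriv_diff_le: "lsq_deriv x v - lsq_deriv x' v \<le> A_norm (x - x') * A_norm v"
proof -
  have "lsq_deriv x v - lsq_deriv x' v = (\<Sum>i\<in>I. A (x - x') i * A v i)"
    by (simp add: lsq_deriv_def A_diff sum_subtractf left_diff_distrib)
  also have "\<dots> \<le> (\<Sum>i\<in>I. \<bar>A (x - x') i\<bar> * \<bar>A v i\<bar>)"
    by (intro sum_mono) (simp add: abs_mult[symmetric])
  also have "\<dots> \<le> A_norm (x - x') * A_norm v"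
    unfolding A_norm_def by (rule L2_set_mult_ineq)
  finally show ?thesis .
qed

lemma linear_lsq_deriv: "linear (lsq_deriv x)"
proof (rule linearI)
  show "lsq_deriv x (u + v) = lsq_deriv x u + lsq_deriv x v" for u v
    by (simp add: lsq_deriv_def A_add distrib_left sum.distrib)
  show "lsq_deriv x (t *\<^sub>R v) = t *\<^sub>R lsq_deriv x v" for t v
    by (simp add: lsq_deriv_def A_scaleR sum_distrib_left mult.left_commute)
qed

lemma continuous_on_f [continuous_intros]: "continuous_on S g \<Longrightarrow> continuous_on S (\<lambda>x. f (g x))"
  using continuous_on_compose2[OF convex_on_continuous[OF open_UNIV convex_f]] by blast

lemma continuous_on_A [continuous_intros]: "continuous_on S g \<Longrightarrow> continuous_on S (\<lambda>x. A (g x) i)"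
  using continuous_on_compose2[OF linear_continuous_on] linear_A linear_conv_bounded_linear by blast

lemma lagr_expand:
  "lagr y (x1 + t *\<^sub>R v1) (x2 + t *\<^sub>R v2) = lagr y x1 x2 + (f (x1 + t *\<^sub>R v1) - f x1)
     + t * (lsq_deriv x2 v2 + inner y (v1 - v2) + rho * inner (x1 - x2) (v1 - v2))
     + t\<^sup>2 * ((A_norm v2)\<^sup>2 / 2 + rho / 2 * (norm (v1 - v2))\<^sup>2)"
proof -
  have diff: "(x1 + t *\<^sub>R v1) - (x2 + t *\<^sub>R v2) = (x1 - x2) + t *\<^sub>R (v1 - v2)"
    by (simp add: algebra_simps)
  have norm_sq: "(norm (r + t *\<^sub>R e))\<^sup>2 = (norm r)\<^sup>2 + 2 * t * inner r e + t\<^sup>2 * (norm e)\<^sup>2" for r e :: 'a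
    by (simp only: power2_norm_eq_inner) (simp add: inner_add inner_commute power2_eq_square algebra_simps)
  show ?thesis
    unfolding lagr_def diff norm_sq lsq_expand by (simp add: inner_add inner_diff algebra_simps)
qed

lemma lagr_shift: "lagr y' x1 x2 = lagr y x1 x2 + inner (y' - y) (x1 - x2)"
  by (simp add: lagr_def inner_diff_left)

lemma lagr_min_growth:
  assumes "is_lagr_min y x1 x2"
  shows "lagr y x1 x2 + rho / 2 * (norm ((u1 - u2) - (x1 - x2)))\<^sup>2 + (A_norm (u2 - x2))\<^sup>2 / 2
    \<le> lagr y u1 u2"
proof -
  define v1 v2 where "v1 = u1 - x1" and "v2 = u2 - x2"
  define L where "L = lsq_deriv x2 v2 + inner y (v1 - v2) + rho * inner (x1 - x2) (v1 - v2)"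
  define S where "S = (A_norm v2)\<^sup>2 / 2 + rho / 2 * (norm (v1 - v2))\<^sup>2"
  have expand: "lagr y (x1 + t *\<^sub>R v1) (x2 + t *\<^sub>R v2)
      = lagr y x1 x2 + (f (x1 + t *\<^sub>R v1) - f x1) + t * L + t\<^sup>2 * S" for t
    by (simp add: L_def S_def lagr_expand)
  have "f x1 \<le> f (x1 + t *\<^sub>R v1) + t * L + t\<^sup>2 * S" for t
  proof -
    have "lagr y x1 x2 \<le> lagr y (x1 + t *\<^sub>R v1) (x2 + t *\<^sub>R v2)"
      using assms unfolding is_lagr_min_def by blast
    then show ?thesis
      unfolding expand by linarith
  qed
  then have "f x1 \<le> f (x1 + v1) + L"
    by (rule convex_on_min_slope_ineq[OF convex_f])
  moreover have "lagr y u1 u2 = lagr y x1 x2 + (f (x1 + v1) - f x1) + L + S"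
    using expand[of 1] by (simp add: v1_def v2_def)
  moreover have "S = rho / 2 * (norm ((u1 - u2) - (x1 - x2)))\<^sup>2 + (A_norm (u2 - x2))\<^sup>2 / 2"
    by (simp add: S_def v1_def v2_def algebra_simps)
  ultimately show ?thesis by linarith
qed

lemma lagr_min_stationary:
  assumes "is_lagr_min y x1 x2"
  shows "lsq_deriv x2 v = inner y v + rho * inner (x1 - x2) v"
proof -
  have "0 \<le> t * (lsq_deriv x2 v - inner y v - rho * inner (x1 - x2) v)
      + t\<^sup>2 * ((A_norm v)\<^sup>2 / 2 + rho / 2 * (norm v)\<^sup>2)" for t
  proof -
    have "lagr y x1 x2 \<le> lagr y (x1 + t *\<^sub>R 0) (x2 + t *\<^sub>R v)"
      using assms unfolding is_lagr_min_def by blast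
    then show ?thesis
      unfolding lagr_expand by (simp add: inner_minus_right algebra_simps)
  qed
  then have "lsq_deriv x2 v - inner y v - rho * inner (x1 - x2) v = 0"
    by (rule quadratic_nonneg_imp_linear_coeff_eq_0)
  then show ?thesis by simp
qed

lemma lagr_min_monotone:
  assumes "is_lagr_min y x1 x2" and "is_lagr_min y' x1' x2'"
  shows "rho * (norm ((x1' - x2') - (x1 - x2)))\<^sup>2 + (A_norm (x2' - x2))\<^sup>2
    \<le> inner (y - y') ((x1' - x2') - (x1 - x2))"
  using lagr_min_growth[OF assms(1), of x1' x2'] lagr_min_growth[OF assms(2), of x1 x2]
    lagr_shift[of y' x1' x2' y] lagr_shift[of y x1 x2 y'] norm_minus_commute[of "x1 - x2" "x1' - x2'"]
    A_norm_minus_commute[of x2 x2']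
  by (simp add: inner_diff_right inner_diff_left)

lemma lagr_min_resid_lipschitz:
  assumes "is_lagr_min y x1 x2" and "is_lagr_min y' x1' x2'"
  shows "rho * norm ((x1' - x2') - (x1 - x2)) \<le> norm (y - y')"
proof -
  define D where "D = (x1' - x2') - (x1 - x2)"
  have "rho * (norm D)\<^sup>2 \<le> norm (y - y') * norm D"
    using lagr_min_monotone[OF assms] norm_cauchy_schwarz[of "y - y'" D]
    unfolding D_def by (smt (verit) zero_le_power2)
  then have "norm D * (rho * norm D) \<le> norm D * norm (y - y')"
    by (simp add: power2_eq_square algebra_simps)
  then show ?thesis
    unfolding D_def[symmetric] using rho_pos
    by (cases "norm D = 0") (auto simp: mult_le_cancel_left)
qed

lemma lagr_lower_bound: "c * norm x1 + rho / 4 * (norm (x1 - x2))\<^sup>2 \<le> lagr y x1 x2 + (norm y)\<^sup>2 / rho"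
proof -
  have "- (norm y * norm (x1 - x2)) \<le> inner y (x1 - x2)"
    using Cauchy_Schwarz_ineq2[of y "x1 - x2"] by simp
  moreover have "norm y * norm (x1 - x2) \<le> rho / 4 * (norm (x1 - x2))\<^sup>2 + (norm y)\<^sup>2 / rho"
    by (rule mult_le_quarter_square_plus[OF rho_pos])
  ultimately show ?thesis
    using coercive_f[of x1] lsq_nonneg[of x2] unfolding lagr_def by linarith
qed

lemma exists_lagr_min: "\<exists>x1 x2. is_lagr_min y x1 x2"
proof -
  define F where "F p = lagr y (fst p) (snd p)" for p :: "'a \<times> 'a"
  define R where "R = lagr y 0 0 + (norm y)\<^sup>2 / rho"
  have "norm p \<le> 2 * R / c + 1 + 4 * R / rho" if "F p \<le> F 0" for p
  proof -
    obtain x1 x2 where p: "p = (x1, x2)" by fastforce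
    define s where "s = norm (x1 - x2)"
    have "c * norm x1 + rho / 4 * s\<^sup>2 \<le> R"
      using lagr_lower_bound[of x1 x2 y] that by (simp add: F_def p R_def s_def)
    moreover have "0 \<le> c * norm x1" "0 \<le> rho / 4 * s\<^sup>2"
      using c_pos rho_pos by simp_all
    ultimately have "c * norm x1 \<le> R" "rho / 4 * s\<^sup>2 \<le> R"
      by linarith+
    then have "norm x1 \<le> R / c" and "s\<^sup>2 \<le> 4 * R / rho"
      using c_pos rho_pos by (simp_all add: pos_le_divide_eq mult.commute)
    moreover have "s \<le> 1 + s\<^sup>2"
    proof -
      have "0 \<le> (s - 1)\<^sup>2" "0 \<le> s"
        by (simp_all add: s_def)
      then show ?thesis
        by (simp add: power2_diff)
    qed
    moreover have "norm x2 \<le> norm x1 + s"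
      using norm_triangle_ineq4[of x1 "x1 - x2"] by (simp add: s_def)
    ultimately show ?thesis
      using norm_Pair_le[of x1 x2] by (simp add: p)
  qed
  then have "bounded {p. F p \<le> F 0}"
    by (auto simp: bounded_iff)
  moreover have "continuous_on UNIV F"
    unfolding F_def lagr_def lsq_def by (intro continuous_intros)
  ultimately obtain p where "\<forall>q. F p \<le> F q"
    using attains_inf_if_bounded_sublevel by blast
  then have "is_lagr_min y (fst p) (snd p)"
    by (simp add: is_lagr_min_def F_def)
  then show ?thesis by blast
qed

lemma exists_primal_min: "\<exists>x. \<forall>u. f x + lsq x \<le> f u + lsq u"
proof (rule attains_inf_if_bounded_sublevel)
  show "continuous_on UNIV (\<lambda>x. f x + lsq x)"
    unfolding lsq_def by (intro continuous_intros)
  have "norm x \<le> (f 0 + lsq 0) / c" if "f x + lsq x \<le> f 0 + lsq 0" for x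
    using that coercive_f[of x] lsq_nonneg[of x] c_pos by (simp add: pos_le_divide_eq mult.commute)
  then show "bounded {x. f x + lsq x \<le> f 0 + lsq 0}"
    by (auto simp: bounded_iff)
qed

lemma exists_saddle: "\<exists>y x. is_lagr_min y x x"
proof -
  obtain x where primal_min: "\<And>u. f x + lsq x \<le> f u + lsq u"
    using exists_primal_min by blast
  \<comment> \<open>\<open>y = M\<^sup>T (M x - b)\<close>, the gradient of \<open>lsq\<close> at the primal solution \<open>x\<close>\<close>
  define y where "y = adjoint (lsq_deriv x) 1"
  have y: "inner y v = lsq_deriv x v" for v
    using adjoint_works[OF linear_lsq_deriv[of x], of v 1] by (simp add: y_def inner_commute)
  have "is_lagr_min y x x"
    unfolding is_lagr_min_def
  proof (intro allI)
    fix u1 u2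
    have "f x \<le> f (x + t *\<^sub>R (u1 - x)) + t * lsq_deriv x (u1 - x) + t\<^sup>2 * ((A_norm (u1 - x))\<^sup>2 / 2)"
      for t
      using primal_min[of "x + t *\<^sub>R (u1 - x)"] unfolding lsq_expand by linarith
    then have "f x \<le> f (x + (u1 - x)) + lsq_deriv x (u1 - x)"
      by (rule convex_on_min_slope_ineq[OF convex_f])
    moreover have "lsq x + lsq_deriv x (u2 - x) \<le> lsq u2"
      using lsq_expand[of x 1 "u2 - x"] by simp
    moreover have "inner y (u1 - u2) = lsq_deriv x (u1 - x) - lsq_deriv x (u2 - x)"
      using y[of "u1 - u2"] linear_diff[OF linear_lsq_deriv, of x "u1 - x" "u2 - x"] by simp
    moreover have "0 \<le> rho / 2 * (norm (u1 - u2))\<^sup>2"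
      using rho_pos by simp
    ultimately show "lagr y x x \<le> lagr y u1 u2"
      by (simp add: lagr_def)
  qed
  then show ?thesis by blast
qed

lemma dual_eq_lagr_min:
  assumes "is_lagr_min y x1 x2"
  shows "dual y = lagr y x1 x2"
  unfolding dual_def
proof (rule cInf_eq_minimum)
  show "lagr y x1 x2 \<in> range (\<lambda>p. lagr y (fst p) (snd p))"
    by (rule range_eqI[of _ _ "(x1, x2)"]) simp
qed (use assms in \<open>auto simp: is_lagr_min_def\<close>)

lemma dual_grad_of_lagr_min:
  obtains x1 x2 where "is_lagr_min y x1 x2" and "dual_grad y = x1 - x2"
proof -
  obtain x1 x2 where "is_lagr_min y x1 x2"
    using exists_lagr_min by blast
  then have "is_lagr_min y (fst (lagr_argmin y)) (snd (lagr_argmin y))"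
    unfolding lagr_argmin_def
    by (rule someI[where P = "\<lambda>p. is_lagr_min y (fst p) (snd p)" and x = "(x1, x2)", simplified])
  then show ?thesis
    by (rule that) (simp add: dual_grad_def)
qed

lemma dual_remainder:
  "\<bar>dual y' - dual y - inner (y' - y) (dual_grad y)\<bar> \<le> (norm (y' - y))\<^sup>2 / rho"
proof -
  obtain x1 x2 where min: "is_lagr_min y x1 x2" and grad: "dual_grad y = x1 - x2"
    by (rule dual_grad_of_lagr_min)
  obtain x1' x2' where min': "is_lagr_min y' x1' x2'"
    using exists_lagr_min by blast
  have "lagr y' x1' x2' \<le> lagr y' x1 x2" and "lagr y x1 x2 \<le> lagr y x1' x2'"
    using min min' unfolding is_lagr_min_def by blast+
  then have bounds: "inner (y' - y) (x1' - x2') \<le> dual y' - dual y"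
      "dual y' - dual y \<le> inner (y' - y) (x1 - x2)"
    unfolding dual_eq_lagr_min[OF min] dual_eq_lagr_min[OF min']
    using lagr_shift[of y' x1 x2 y] lagr_shift[of y' x1' x2' y] by linarith+
  have "\<bar>inner (y' - y) ((x1' - x2') - (x1 - x2))\<bar> \<le> norm (y' - y) * norm ((x1' - x2') - (x1 - x2))"
    by (rule Cauchy_Schwarz_ineq2)
  also have "\<dots> \<le> norm (y' - y) * (norm (y' - y) / rho)"
    using lagr_min_resid_lipschitz[OF min min'] rho_pos
    by (intro mult_left_mono) (simp_all add: pos_le_divide_eq mult.commute norm_minus_commute)
  finally show ?thesis
    using bounds unfolding grad by (simp add: inner_diff_right power2_eq_square abs_le_iff)
qed

lemma has_gderiv_dual: "GDERIV dual y :> dual_grad y"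
  by (rule gderiv_if_quadratic_remainder[where C = "1 / rho"]) (use dual_remainder in simp)

lemma saddle_maximizes_dual:
  assumes "is_lagr_min y x x"
  shows "dual y' \<le> dual y"
proof -
  obtain x1 x2 where min': "is_lagr_min y' x1 x2"
    using exists_lagr_min by blast
  have "dual y' \<le> lagr y' x x"
    using min' unfolding dual_eq_lagr_min[OF min'] is_lagr_min_def by blast
  also have "\<dots> = dual y"
    by (simp add: lagr_def dual_eq_lagr_min[OF assms])
  finally show ?thesis .
qed

lemma dist_saddle_le_resid:
  assumes saddle: "is_lagr_min y0 x0 x0" and min: "is_lagr_min y x1 x2"
  shows "norm (y - y0) \<le> (A_bound * (A_bound + sqrt rho) + rho) * norm (x1 - x2)"
proof -
  define k v s a where "k = A_bound" and "v = y - y0" and "s = norm (x1 - x2)"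
    and "a = A_norm (x2 - x0)"
  have "0 \<le> k" "0 \<le> a" "0 \<le> s"
    by (simp_all add: k_def A_bound_def a_def A_norm_def s_def)
  have "- inner (x1 - x2) v \<le> s * norm v"
    using Cauchy_Schwarz_ineq2[of "x1 - x2" v] by (simp add: s_def abs_le_iff)
  then have "rho * (- inner (x1 - x2) v) \<le> rho * (s * norm v)"
    using rho_pos by (intro mult_left_mono) simp_all
  moreover have "lsq_deriv x2 v - lsq_deriv x0 v \<le> a * (k * norm v)"
    using lsq_deriv_diff_le[of x2 v x0] mult_left_mono[OF A_norm_le[of v] \<open>0 \<le> a\<close>]
    by (simp add: a_def k_def)
  moreover have "(norm v)\<^sup>2 = lsq_deriv x2 v - lsq_deriv x0 v - rho * inner (x1 - x2) v"
    using lagr_min_stationary[OF min, of v] lagr_min_stationary[OF saddle, of v]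
    by (simp add: v_def power2_norm_eq_inner inner_diff_left)
  ultimately have "(norm v)\<^sup>2 \<le> (k * a + rho * s) * norm v + 0\<^sup>2"
    by (simp add: algebra_simps)
  then have v_le: "norm v \<le> k * a + rho * s"
    using le_sum_if_square_le[of "k * a + rho * s" 0 "norm v"] \<open>0 \<le> k\<close> \<open>0 \<le> a\<close> \<open>0 \<le> s\<close> rho_pos
    by simp
  have "rho * (norm (x1 - x2))\<^sup>2 + a\<^sup>2 \<le> - inner v (x1 - x2)"
    using lagr_min_monotone[OF min saddle]
    unfolding a_def v_def A_norm_minus_commute[of x0 x2] by (simp add: inner_diff_right norm_minus_commute)
  moreover have "0 \<le> rho * (norm (x1 - x2))\<^sup>2"
    using rho_pos by simp
  ultimately have "a\<^sup>2 \<le> norm v * s"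
    using Cauchy_Schwarz_ineq2[of v "x1 - x2"] unfolding s_def abs_le_iff by linarith
  also have "\<dots> \<le> (k * a + rho * s) * s"
    using mult_right_mono[OF v_le \<open>0 \<le> s\<close>] by simp
  also have "\<dots> = (k * s) * a + (sqrt rho * s)\<^sup>2"
    using rho_pos by (simp add: power_mult_distrib power2_eq_square algebra_simps)
  finally have "a \<le> k * s + sqrt rho * s"
    using le_sum_if_square_le[of "k * s" "sqrt rho * s" a] \<open>0 \<le> k\<close> \<open>0 \<le> s\<close> rho_pos by simp
  with v_le show ?thesis
    using mult_left_mono[of a "k * s + sqrt rho * s" k] \<open>0 \<le> k\<close>
    by (simp add: k_def v_def s_def algebra_simps)
qed

lemma dual_error_bound:
  "\<exists>\<tau>>0. \<forall>y. infdist y {z. \<forall>y'. dual y' \<le> dual z} \<le> \<tau> * norm (dual_grad y)"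
proof (intro exI[of _ "A_bound * (A_bound + sqrt rho) + rho"] conjI allI)
  show "0 < A_bound * (A_bound + sqrt rho) + rho"
    using rho_pos by (simp add: A_bound_def add_nonneg_pos)
  obtain y0 x0 where saddle: "is_lagr_min y0 x0 x0"
    using exists_saddle by blast
  fix y
  obtain x1 x2 where min: "is_lagr_min y x1 x2" and grad: "dual_grad y = x1 - x2"
    by (rule dual_grad_of_lagr_min)
  have "infdist y {z. \<forall>y'. dual y' \<le> dual z} \<le> dist y y0"
    using saddle_maximizes_dual[OF saddle] by (intro infdist_le) simp
  also have "\<dots> \<le> (A_bound * (A_bound + sqrt rho) + rho) * norm (dual_grad y)"
    unfolding dist_norm grad by (rule dist_saddle_le_resid[OF saddle min])
  finally show "infdist y {z. \<forall>y'. dual y' \<le> dual z} \<le> (A_bound * (A_bound + sqrt rho) + rho) * norm (dual_grad y)" .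
qed

end

section \<open>The latent group lasso penalty\<close>

lemma block_norm_eq_L2_set: "block_norm J x = L2_set (\<lambda>k. x $ k) J"
  by (simp add: block_norm_def L2_set_def)

lemma convex_block_norm:
  fixes J :: "'n::finite set"
  shows "convex_on UNIV (block_norm J)"
proof (rule convex_onI)
  fix t :: real and x y :: "real^'n"
  assume t: "0 < t" "t < 1"
  have "block_norm J ((1 - t) *\<^sub>R x + t *\<^sub>R y) = L2_set (\<lambda>k. (1 - t) * x $ k + t * y $ k) J"
    by (simp add: block_norm_eq_L2_set)
  also have "\<dots> \<le> L2_set (\<lambda>k. (1 - t) * x $ k) J + L2_set (\<lambda>k. t * y $ k) J"
    by (rule L2_set_triangle_ineq)
  also have "\<dots> = (1 - t) * block_norm J x + t * block_norm J y"
    using t by (simp add: block_norm_eq_L2_set L2_set_right_distrib)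
  finally show "block_norm J ((1 - t) *\<^sub>R x + t *\<^sub>R y) \<le> (1 - t) * block_norm J x + t * block_norm J y" .
qed simp

lemma convex_on_sum_functions:
  assumes "\<And>i. i \<in> K \<Longrightarrow> convex_on S (f i)" and "convex S"
  shows "convex_on S (\<lambda>x. \<Sum>i\<in>K. f i x)"
  using assms(1)
proof (induction K rule: infinite_finite_induct)
  case (insert i K)
  then show ?case by (auto intro!: convex_on_add)
qed (use assms(2) in \<open>simp_all add: convex_on_const\<close>)

lemma convex_group_penalty:
  assumes "0 \<le> lam" and "\<forall>g\<in>G. 0 \<le> w g"
  shows "convex_on UNIV (\<lambda>x. lam * (\<Sum>g\<in>G. w g * block_norm (j g) x))"
  using assms by (intro convex_on_cmul convex_on_sum_functions convex_block_norm) auto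

lemma blocks_cover:
  fixes j :: "nat set \<Rightarrow> 'n::finite set"
  assumes "finite G" and "CARD('n) = (\<Sum>g\<in>G. card g)"
    and "\<forall>g\<in>G. \<forall>h\<in>G. g \<noteq> h \<longrightarrow> j g \<inter> j h = {}" and "\<forall>g\<in>G. card (j g) = card g"
  shows "\<Union>(j ` G) = UNIV"
proof -
  have "card (\<Union>(j ` G)) = (\<Sum>g\<in>G. card (j g))"
    using assms by (intro card_UN_disjoint) auto
  also have "\<dots> = CARD('n)"
    using assms by simp
  finally show ?thesis
    by (intro card_subset_eq) auto
qed

lemma group_penalty_coercive:
  fixes j :: "nat set \<Rightarrow> 'n::finite set"
  assumes "finite G" and "\<Union>(j ` G) = UNIV" and "0 \<le> lam" and "\<forall>g\<in>G. 0 < w g"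
  shows "lam * Min (w ` G) / CARD('n) * norm x \<le> lam * (\<Sum>g\<in>G. w g * block_norm (j g) x)"
proof -
  define B where "B = (\<Sum>g\<in>G. block_norm (j g) x)"
  have "G \<noteq> {}"
    using assms(2) by auto
  then have Min_pos: "0 < Min (w ` G)"
    using assms(1,4) by simp
  have "\<bar>x $ k\<bar> \<le> B" for k
  proof -
    obtain g where g: "g \<in> G" "k \<in> j g"
      using assms(2) by blast
    have "\<bar>x $ k\<bar> \<le> block_norm (j g) x"
      using member_le_L2_set[of "j g" k "\<lambda>k. \<bar>x $ k\<bar>"] g(2) by (simp add: block_norm_def L2_set_def)
    also have "\<dots> \<le> B"
      unfolding B_def using assms(1) g(1) by (intro member_le_sum) (simp_all add: block_norm_eq_L2_set)
    finally show ?thesis .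
  qed
  then have "norm x \<le> CARD('n) * B"
    using norm_le_l1_cart[of x] sum_bounded_above[of UNIV "\<lambda>k. \<bar>x $ k\<bar>" B] by simp
  then have "lam * Min (w ` G) / CARD('n) * norm x \<le> lam * Min (w ` G) / CARD('n) * (CARD('n) * B)"
    using assms(3) Min_pos by (intro mult_left_mono) simp_all
  also have "\<dots> = lam * (Min (w ` G) * B)"
    by simp
  also have "\<dots> \<le> lam * (\<Sum>g\<in>G. w g * block_norm (j g) x)"
    unfolding B_def sum_distrib_left using assms(1,3)
    by (intro mult_left_mono sum_mono mult_right_mono) (simp_all add: block_norm_eq_L2_set)
  finally show ?thesis .
qed

lemma linear_Mop: "linear (\<lambda>x. Mop G j phi x i)"
  by (rule linearI) (simp_all add: Mop_def sum.distrib sum_distrib_left)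

lemma split_least_squares_group_lasso:
  fixes j :: "nat set \<Rightarrow> 'n::finite set"
  assumes "finite G" and "\<Union>(j ` G) = UNIV" and "0 < lam" and "\<forall>g\<in>G. 0 < w g" and "0 < rho"
  shows "split_least_squares (\<lambda>x. lam * (\<Sum>g\<in>G. w g * block_norm (j g) x)) (Mop G j phi)
      rho (lam * Min (w ` G) / CARD('n))"
proof -
  have "G \<noteq> {}"
    using assms(2) by auto
  then have "0 < Min (w ` G)"
    using assms(1,4) by simp
  then show ?thesis
    unfolding split_least_squares_def
    using convex_group_penalty[of lam G w j] group_penalty_coercive[OF assms(1,2), of lam w] assms(3-5)
    by (simp add: less_imp_le linear_Mop)
qed

theorem lemma3p1:
  fixes G :: "nat set set" and d :: nat
    and j :: "nat set \<Rightarrow> 'n::finite set" and phi :: "nat set \<Rightarrow> 'n \<Rightarrow> nat"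
    and lam rho :: real and w :: "nat set \<Rightarrow> real" and b :: "nat \<Rightarrow> real"
  assumes "finite G"
    and "\<forall>g\<in>G. g \<noteq> {} \<and> g \<subseteq> {1..d}"
    and "CARD('n) = (\<Sum>g\<in>G. card g)"
    and "\<forall>g\<in>G. \<forall>h\<in>G. g \<noteq> h \<longrightarrow> j g \<inter> j h = {}"
    and "\<forall>g\<in>G. card (j g) = card g"
    and "\<forall>g\<in>G. bij_betw (phi g) (j g) g"
    and "lam > 0" and "\<forall>g\<in>G. w g > 0" and "rho > 0"
  shows "\<exists>\<tau>>0. \<forall>y::real^'n. \<exists>D.
           GDERIV (aug_dual G j phi d lam w b rho) y :> D \<and>
           infdist y (dual_maximizers (aug_dual G j phi d lam w b rho)) \<le> \<tau> * norm D"
proof -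
  \<comment> \<open>Neither g \<subseteq> {1..d}, g \<noteq> {} nor the bijectivity of phi g is needed: Mop is linear for any j, phi.\<close>
  have cover: "\<Union>(j ` G) = UNIV"
    using assms(1,3,4,5) by (rule blocks_cover)
  have "split_least_squares (\<lambda>x. lam * (\<Sum>g\<in>G. w g * block_norm (j g) x)) (Mop G j phi)
      rho (lam * Min (w ` G) / CARD('n))"
    using assms(1) cover assms(7-9) by (rule split_least_squares_group_lasso)
  then interpret prox: split_least_squares "\<lambda>x. lam * (\<Sum>g\<in>G. w g * block_norm (j g) x)" "Mop G j phi"
    "{1..d}" b rho "lam * Min (w ` G) / CARD('n)" .
  have dual_eq: "aug_dual G j phi d lam w b rho = prox.dual"
    unfolding fun_eq_iff aug_dual_def aug_lag_def prox.dual_def prox.lagr_def prox.lsq_def by simp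
  obtain \<tau> where "0 < \<tau>"
    and error_bound: "\<And>y. infdist y {z. \<forall>y'. prox.dual y' \<le> prox.dual z} \<le> \<tau> * norm (prox.dual_grad y)"
    using prox.dual_error_bound by blast
  show ?thesis
  proof (intro exI[of _ \<tau>] conjI allI)
    fix y :: "real^'n"
    show "\<exists>D. GDERIV (aug_dual G j phi d lam w b rho) y :> D \<and>
        infdist y (dual_maximizers (aug_dual G j phi d lam w b rho)) \<le> \<tau> * norm D"
      unfolding dual_eq dual_maximizers_def using prox.has_gderiv_dual error_bound by blast
  qed (rule \<open>0 < \<tau>\<close>)
qed

end
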